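(* For every integer $k\ge1$, $$t^+_k(2)=\tfrac16\left(2^k-(-1)^k\left(1+(-3)^{\lceil k/2\rceil}\right)\right),\qquad t^-_k(2)=\tfrac16\left(2^k-(-1)^k\left(1-(-3)^{\lceil k/2\rceil}\right)\right).$$
   Context: $T_\pm$ is a directed graph on three vertices $x_0,x_1,x_2$ (a triangle) with both arcs between each pair; the clockwise arcs $x_0\to x_1$, $x_1\to x_2$, $x_2\to x_0$ have sign $+$ and the reverse (counterclockwise) arcs have sign $-$. A walk is positive (negative) if the product of the signs of its arcs is $+$ ($-$). For vertices $x,y$ such that the clockwise path from $x$ to $y$ has length $2$ (i.e. $y\to x$ is a clockwise arc), $t^+_k(2)$ (resp. $t^-_k(2)$) is the number of positive (resp. negative) walks of length $k$ from $x$ to $y$. *)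

theory Defs
  imports Complex_Main
begin

text \<open>Vertices x_0, x_1, x_2 are the naturals 0, 1, 2.
  There is an arc between every pair of distinct vertices (in both directions);
  the clockwise arc a -> (a+1) mod 3 has sign +1, the counterclockwise arc
  a -> (a+2) mod 3 has sign -1.\<close>

definition T_vertices :: "nat set" where
  "T_vertices = {0, 1, 2}"

definition T_arc :: "nat \<Rightarrow> nat \<Rightarrow> bool" where
  "T_arc a b \<longleftrightarrow> a \<in> T_vertices \<and> b \<in> T_vertices \<and> a \<noteq> b"

definition T_sign :: "nat \<Rightarrow> nat \<Rightarrow> int" where
  "T_sign a b = (if b = (a + 1) mod 3 then 1 else -1)"

definition T_walks :: "nat \<Rightarrow> nat \<Rightarrow> nat \<Rightarrow> nat list set" where
  "T_walks k x y = {ws. length ws = Suc k \<and> ws ! 0 = x \<and> ws ! k = y \<and>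
      (\<forall>i<k. T_arc (ws ! i) (ws ! Suc i))}"

definition walk_sign :: "nat list \<Rightarrow> int" where
  "walk_sign ws = (\<Prod>i<length ws - 1. T_sign (ws ! i) (ws ! Suc i))"

definition t_plus :: "nat \<Rightarrow> nat \<Rightarrow> nat \<Rightarrow> nat" where
  "t_plus k x y = card {ws \<in> T_walks k x y. walk_sign ws = 1}"

definition t_minus :: "nat \<Rightarrow> nat \<Rightarrow> nat \<Rightarrow> nat" where
  "t_minus k x y = card {ws \<in> T_walks k x y. walk_sign ws = -1}"

end

theory Submission
  imports Defs
begin

(*
  A walk ending at y enters y either from (y + 2) mod 3 along a positive arc or from
  (y + 1) mod 3 along a negative arc.  Hence the number of walks of length k and sign s
  depends only on the clockwise displacement d = (y - x) mod 3 and obeys a linear recurrence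
  in k.  The total t^+ + t^- satisfies N(k+1, d) = N(k, d+1) + N(k, d+2), so
  3 N(k, d) = 2^k + 2(-1)^k for d = 0 and 2^k - (-1)^k otherwise.  For the balance
  D = t^+ - t^-, two steps of the recurrence give D(k+2, d) = (sum over d' of D(k, d')) - 3 D(k, d),
  and that sum vanishes for k >= 1; so D is multiplied by -3 every two steps, which produces
  the factor (-3)^(ceil(k/2)).
*)

definition signed_walks :: "nat \<Rightarrow> nat \<Rightarrow> nat \<Rightarrow> int \<Rightarrow> nat list set" where
  "signed_walks k x y s = {ws \<in> T_walks k x y. walk_sign ws = s}"

lemma T_walks_Suc:
  "ws \<in> T_walks (Suc k) x y \<longleftrightarrow> (\<exists>vs z. ws = vs @ [y] \<and> vs \<in> T_walks k x z \<and> T_arc z y)"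
proof
  assume ws: "ws \<in> T_walks (Suc k) x y"
  then have len: "length ws = Suc (Suc k)" and last: "ws ! Suc k = y"
    by (simp_all add: T_walks_def)
  define vs where "vs = take (Suc k) ws"
  have split: "ws = vs @ [y]"
    using len last unfolding vs_def
    by (metis Suc_diff_Suc lessI take_Suc_conv_app_nth take_all_iff order.refl)
  have "vs \<in> T_walks k x (vs ! k)" "T_arc (vs ! k) y"
    using ws len split by (auto simp: T_walks_def nth_append) (metis less_SucI)
  with split show "\<exists>vs z. ws = vs @ [y] \<and> vs \<in> T_walks k x z \<and> T_arc z y" by blast
next
  assume "\<exists>vs z. ws = vs @ [y] \<and> vs \<in> T_walks k x z \<and> T_arc z y"
  then obtain vs z where "ws = vs @ [y]" "vs \<in> T_walks k x z" "T_arc z y" by blast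
  then show "ws \<in> T_walks (Suc k) x y"
    by (auto simp: T_walks_def nth_append less_Suc_eq)
qed

lemma walk_sign_snoc:
  assumes "length vs = Suc k"
  shows "walk_sign (vs @ [y]) = walk_sign vs * T_sign (vs ! k) y"
  using assms by (simp add: walk_sign_def nth_append)

lemma finite_T_walks: "finite (T_walks k x y)"
proof (rule finite_subset)
  show "T_walks k x y \<subseteq> {ws. set ws \<subseteq> insert y T_vertices \<and> length ws = Suc k}"
  proof (rule subsetI, rule CollectI, rule conjI)
    fix ws assume ws: "ws \<in> T_walks k x y"
    show "set ws \<subseteq> insert y T_vertices"
    proof
      fix v assume "v \<in> set ws"
      then obtain i where "i < Suc k" "v = ws ! i"
        using ws by (auto simp: T_walks_def in_set_conv_nth)
      then show "v \<in> insert y T_vertices"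
        using ws by (cases "i = k") (auto simp: T_walks_def T_arc_def)
    qed
    show "length ws = Suc k" using ws by (simp add: T_walks_def)
  qed
  show "finite {ws. set ws \<subseteq> insert y T_vertices \<and> length ws = Suc k}"
    by (rule finite_lists_length_eq) (simp add: T_vertices_def)
qed

lemma signed_walks_Suc:
  assumes "y \<in> T_vertices"
  shows "signed_walks (Suc k) x y s = (\<lambda>vs. vs @ [y]) `
    (signed_walks k x ((y + 2) mod 3) s \<union> signed_walks k x ((y + 1) mod 3) (- s))"
proof -
  have pred: "T_arc z y \<longleftrightarrow> z = (y + 2) mod 3 \<or> z = (y + 1) mod 3" for z
    using assms by (auto simp: T_arc_def T_vertices_def)
  have sign: "T_sign ((y + 2) mod 3) y = 1" "T_sign ((y + 1) mod 3) y = -1"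
    using assms by (auto simp: T_sign_def T_vertices_def)
  have snoc: "walk_sign (vs @ [y]) = walk_sign vs * T_sign z y" if "vs \<in> T_walks k x z" for vs z
    using that walk_sign_snoc[of vs k y] by (simp add: T_walks_def)
  show ?thesis
  proof (rule set_eqI)
    fix ws
    show "ws \<in> signed_walks (Suc k) x y s \<longleftrightarrow> ws \<in> (\<lambda>vs. vs @ [y]) `
      (signed_walks k x ((y + 2) mod 3) s \<union> signed_walks k x ((y + 1) mod 3) (- s))"
      unfolding signed_walks_def T_walks_Suc pred using snoc sign by (auto simp: algebra_simps)
  qed
qed

lemma card_signed_walks_Suc:
  assumes "y \<in> T_vertices"
  shows "card (signed_walks (Suc k) x y s) =
    card (signed_walks k x ((y + 2) mod 3) s) + card (signed_walks k x ((y + 1) mod 3) (- s))"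
proof -
  have finite: "finite (signed_walks k x z t)" for z t
    using finite_T_walks by (simp add: signed_walks_def)
  have "(y + 2) mod 3 \<noteq> (y + 1) mod 3" by presburger
  then have disjoint:
      "signed_walks k x ((y + 2) mod 3) s \<inter> signed_walks k x ((y + 1) mod 3) (- s) = {}"
    by (auto simp: signed_walks_def T_walks_def)
  have "card (signed_walks (Suc k) x y s) =
      card (signed_walks k x ((y + 2) mod 3) s \<union> signed_walks k x ((y + 1) mod 3) (- s))"
    unfolding signed_walks_Suc[OF assms] by (rule card_image) (simp add: inj_on_def)
  also have "\<dots> =
      card (signed_walks k x ((y + 2) mod 3) s) + card (signed_walks k x ((y + 1) mod 3) (- s))"
    by (rule card_Un_disjoint[OF finite finite disjoint])
  finally show ?thesis .
qed

lemma signed_walks_0: "signed_walks 0 x y s = (if x = y \<and> s = 1 then {[x]} else {})"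
  by (auto simp: signed_walks_def T_walks_def walk_sign_def length_Suc_conv)

fun signed_walk_count :: "nat \<Rightarrow> nat \<Rightarrow> int \<Rightarrow> int" where
  "signed_walk_count 0 d s = (if d = 0 \<and> s = 1 then 1 else 0)"
| "signed_walk_count (Suc k) d s =
     signed_walk_count k ((d + 2) mod 3) s + signed_walk_count k ((d + 1) mod 3) (- s)"

lemma card_signed_walks:
  assumes "x \<in> T_vertices" and "y \<in> T_vertices"
  shows "int (card (signed_walks k x y s)) = signed_walk_count k ((y + 3 - x) mod 3) s"
  using assms(2)
proof (induction k arbitrary: y s)
  case 0
  then show ?case using assms(1) by (auto simp: signed_walks_0 T_vertices_def)
next
  case (Suc k)
  have shift: "((y + j) mod 3 + 3 - x) mod 3 = ((y + 3 - x) mod 3 + j) mod 3" for j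
  proof -
    have "x \<le> 3" using assms(1) by (auto simp: T_vertices_def)
    then have "(y + j) mod 3 + 3 - x = (y + j) mod 3 + (3 - x)" "y + 3 - x = y + (3 - x)"
      by simp_all
    moreover have "((y + j) mod 3 + (3 - x)) mod 3 = ((y + (3 - x)) mod 3 + j) mod 3"
      by (simp add: mod_simps ac_simps)
    ultimately show ?thesis by simp
  qed
  have "(y + 2) mod 3 \<in> T_vertices" "(y + 1) mod 3 \<in> T_vertices"
    by (auto simp: T_vertices_def)
  with Suc have "int (card (signed_walks (Suc k) x y s)) =
      signed_walk_count k (((y + 2) mod 3 + 3 - x) mod 3) s +
      signed_walk_count k (((y + 1) mod 3 + 3 - x) mod 3) (- s)"
    by (simp add: card_signed_walks_Suc)
  also have "\<dots> = signed_walk_count (Suc k) ((y + 3 - x) mod 3) s"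
    by (simp only: shift signed_walk_count.simps)
  finally show ?case .
qed

lemma less_3_cases: "(d::nat) < 3 \<Longrightarrow> d = 0 \<or> d = 1 \<or> d = 2"
  by auto

definition walk_total :: "nat \<Rightarrow> nat \<Rightarrow> int" where
  "walk_total k d = signed_walk_count k d 1 + signed_walk_count k d (-1)"

definition walk_balance :: "nat \<Rightarrow> nat \<Rightarrow> int" where
  "walk_balance k d = signed_walk_count k d 1 - signed_walk_count k d (-1)"

lemma walk_total_Suc:
  "walk_total (Suc k) d = walk_total k ((d + 2) mod 3) + walk_total k ((d + 1) mod 3)"
  by (simp add: walk_total_def)

lemma walk_balance_Suc:
  "walk_balance (Suc k) d = walk_balance k ((d + 2) mod 3) - walk_balance k ((d + 1) mod 3)"
  by (simp add: walk_balance_def)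

lemma walk_total_closed_form:
  assumes "d < 3"
  shows "3 * walk_total k d = 2 ^ k + (-1) ^ k * (if d = 0 then 2 else -1)"
  using assms
proof (induction k arbitrary: d)
  case 0
  then show ?case by (simp add: walk_total_def)
next
  case (Suc k)
  have "(d + 2) mod 3 < 3" "(d + 1) mod 3 < 3" by simp_all
  with Suc.IH have "3 * walk_total (Suc k) d = 2 * 2 ^ k +
      (-1) ^ k * ((if (d + 2) mod 3 = 0 then 2 else -1) + (if (d + 1) mod 3 = 0 then 2 else -1))"
    by (simp add: walk_total_Suc algebra_simps)
  also have "\<dots> = 2 ^ Suc k + (-1) ^ Suc k * (if d = 0 then 2 else -1)"
    using less_3_cases[OF Suc.prems] by (elim disjE) simp_all
  finally show ?case .
qed

lemma walk_balance_sum_vanishes: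
  "walk_balance (Suc k) 0 + walk_balance (Suc k) 1 + walk_balance (Suc k) 2 = 0"
  by (simp add: walk_balance_Suc)

lemma walk_balance_Suc_Suc:
  assumes "d < 3"
  shows "walk_balance (Suc (Suc k)) d =
    walk_balance k 0 + walk_balance k 1 + walk_balance k 2 - 3 * walk_balance k d"
  using less_3_cases[OF assms] by (elim disjE) (simp_all add: walk_balance_Suc numeral_2_eq_2)

lemma walk_balance_recurrence:
  assumes "d < 3"
  shows "walk_balance (Suc (Suc (Suc k))) d = -3 * walk_balance (Suc k) d"
  using walk_balance_Suc_Suc[OF assms, of "Suc k"] walk_balance_sum_vanishes[of k]
  by (simp add: numeral_3_eq_3)

lemma walk_balance_odd:
  assumes "d < 3"
  shows "walk_balance (2 * m + 1) d = (-3) ^ m * walk_balance 1 d"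
proof (induction m)
  case (Suc m)
  then show ?case
    by (simp add: walk_balance_recurrence[OF assms])
qed simp

lemma walk_balance_even:
  assumes "d < 3"
  shows "walk_balance (2 * m + 2) d = (-3) ^ m * walk_balance 2 d"
proof (induction m)
  case (Suc m)
  then show ?case
    by (simp add: walk_balance_recurrence[OF assms])
qed (simp add: numeral_2_eq_2)

lemma walk_balance_closed_form:
  assumes "k \<ge> 1"
  shows "3 * walk_balance k 2 = - ((-1) ^ k * (-3) ^ ((k + 1) div 2))"
proof -
  have "\<exists>m. k = 2 * m + 1 \<or> k = 2 * m + 2"
    using assms by presburger
  then obtain m where "k = 2 * m + 1 \<or> k = 2 * m + 2" ..
  then show ?thesis
  proof
    assume k: "k = 2 * m + 1"
    have "walk_balance 1 2 = -1" by (simp add: walk_balance_def)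
    then show ?thesis using walk_balance_odd[of 2 m] k by simp
  next
    assume k: "k = 2 * m + 2"
    have "walk_balance 2 2 = 1" by (simp add: walk_balance_def numeral_2_eq_2)
    then show ?thesis using walk_balance_even[of 2 m] k by simp
  qed
qed

lemma nat_ceiling_half: "nat \<lceil>real k / 2\<rceil> = (k + 1) div 2"
proof -
  consider j where "k = 2 * j" | j where "k = 2 * j + 1"
    by (metis oddE evenE)
  then show ?thesis
  proof cases
    case 1
    then show ?thesis by simp
  next
    case 2
    then have "\<lceil>real k / 2\<rceil> = int j + 1"
      by (simp add: ceiling_eq_iff)
    with 2 show ?thesis by simp
  qed
qed

lemma signed_walk_count_2_closed_form:
  assumes "k \<ge> 1"
  shows "6 * signed_walk_count k 2 1 = 2 ^ k - (-1) ^ k * (1 + (-3) ^ ((k + 1) div 2))"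
    and "6 * signed_walk_count k 2 (-1) = 2 ^ k - (-1) ^ k * (1 - (-3) ^ ((k + 1) div 2))"
  using walk_total_closed_form[of 2 k] walk_balance_closed_form[OF assms]
  by (simp_all add: walk_total_def walk_balance_def algebra_simps)

theorem lemma13:
  fixes k x y :: nat
  assumes "k \<ge> 1" and "x \<in> T_vertices" and "y = (x + 2) mod 3"
  shows "real (t_plus k x y) =
           (2 ^ k - (-1) ^ k * (1 + (-3) ^ nat \<lceil>real k / 2\<rceil>)) / 6 \<and>
         real (t_minus k x y) =
           (2 ^ k - (-1) ^ k * (1 - (-3) ^ nat \<lceil>real k / 2\<rceil>)) / 6"
proof -
  have "y \<in> T_vertices" using assms(3) by (auto simp: T_vertices_def)
  moreover have "(y + 3 - x) mod 3 = 2" using assms(2,3) by (auto simp: T_vertices_def)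
  ultimately have plus: "signed_walk_count k 2 1 = int (t_plus k x y)"
    and minus: "signed_walk_count k 2 (-1) = int (t_minus k x y)"
    using card_signed_walks[OF assms(2)] by (simp_all add: t_plus_def t_minus_def signed_walks_def)
  have "real_of_int (6 * signed_walk_count k 2 1) =
      2 ^ k - (-1) ^ k * (1 + (-3) ^ ((k + 1) div 2))"
    and "real_of_int (6 * signed_walk_count k 2 (-1)) =
      2 ^ k - (-1) ^ k * (1 - (-3) ^ ((k + 1) div 2))"
    unfolding signed_walk_count_2_closed_form[OF assms(1)] by simp_all
  then show ?thesis
    unfolding plus minus nat_ceiling_half by simp
qed

end
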